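(* Let $\lambda,\zeta\leq 0$, $f_S(y)=\zeta y$, $f_F(y)=\lambda y$, $\eta>0$, $\tau>0$, $m,s\in\mathbb{N}$ and $y\in\mathbb{R}$. Then one step of the mROCK2 method with macro-step $\tau$, micro-step $\eta$, $m$ micro stages and $s$ macro stages applied to $\dot y=f_F(y)+f_S(y)$ gives $y_{n+1}=R_{s,m}(\lambda,\zeta,\tau,\eta)\,y_n$ with $$R_{s,m}(\lambda,\zeta,\tau,\eta)=R_s\!\left(\tau\,\Phi_m(\eta\lambda)(\lambda+\zeta)\Bigl(1-\frac{\eta\lambda\alpha_m}{2}\Phi_m(\eta\lambda)\Bigr)\right),$$ where $\Phi_m(z)=\frac{P_m(z)-1}{z}$ ($\Phi_m(0)=1$), $\alpha_m=P_m''(0)$, and $R_s$ is the stability polynomial of the $s$-stage ROCK2 scheme.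
   Context: RKC method (micro method). For damping $\varepsilon\geq 0$ and $m$ stages, let $T_j$ be the Chebyshev polynomials ($T_0=1$, $T_1(x)=x$, $T_j=2xT_{j-1}-T_{j-2}$), $\omega_0=1+\varepsilon/m^2$, $\omega_1=T_m(\omega_0)/T_m'(\omega_0)$, $b_j=1/T_j(\omega_0)$. One step of size $h$ for $\dot u=g(u)$ from $u_0$: $k_0=u_0$, $k_1=k_0+\frac{\omega_1}{\omega_0}h\,g(k_0)$, $k_j=\nu_jk_{j-1}+\kappa_jk_{j-2}+\mu_jh\,g(k_{j-1})$ for $j=2,\dots,m$, with $\mu_j=2\omega_1b_j/b_{j-1}$, $\nu_j=2\omega_0b_j/b_{j-1}$, $\kappa_j=-b_j/b_{j-2}$; the result is $k_m$. Its stability polynomial is $P_m(z)=b_mT_m(\omega_0+\omega_1z)$. ROCK2 method (macro method): an explicit $s$-stage Runge–Kutta method; applied to $\dot y=\kappa y$ with step $\tau$ it gives $y_{n+1}=R_s(\tau\kappa)y_n$, $R_s$ being its stability polynomial. mROCK2 step for $\dot y=f_F(y)+f_S(y)$: define $\bar f_{\eta,2}(y)$ by (i) $u_\eta$ = one RKC step of size $\eta$ for $\dot u=f_F(u)+f_S(y)$, $u(0)=y$; (ii) $\bar f_{\eta,1}(y)=(u_\eta-y)/\eta$; (iii) $v_\eta$ = one RKC step of size $\eta$ for $\dot v=f_F\bigl(v-\frac{\alpha_m\eta}{2}\bar f_{\eta,1}(y)\bigr)+f_S(y)$, $v(0)=y$; (iv) $\bar f_{\eta,2}(y)=(v_\eta-y)/\eta$.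 Then $y_{n+1}$ is one ROCK2 step of size $\tau$ from $y_n$ for $\dot y=\bar f_{\eta,2}(y)$. *)

theory Defs
  imports "HOL-Analysis.Analysis"
begin

fun cheb :: "nat \<Rightarrow> real \<Rightarrow> real" where
  "cheb 0 x = 1"
| "cheb (Suc 0) x = x"
| "cheb (Suc (Suc j)) x = 2 * x * cheb (Suc j) x - cheb j x"

definition rkc_w0 :: "real \<Rightarrow> nat \<Rightarrow> real" where
  "rkc_w0 eps m = 1 + eps / (real m)^2"

definition rkc_w1 :: "real \<Rightarrow> nat \<Rightarrow> real" where
  "rkc_w1 eps m = cheb m (rkc_w0 eps m) / deriv (cheb m) (rkc_w0 eps m)"

definition rkc_b :: "real \<Rightarrow> nat \<Rightarrow> nat \<Rightarrow> real" where
  "rkc_b eps m j = 1 / cheb j (rkc_w0 eps m)"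

definition rkc_mu :: "real \<Rightarrow> nat \<Rightarrow> nat \<Rightarrow> real" where
  "rkc_mu eps m j = 2 * rkc_w1 eps m * rkc_b eps m j / rkc_b eps m (j - 1)"

definition rkc_nu :: "real \<Rightarrow> nat \<Rightarrow> nat \<Rightarrow> real" where
  "rkc_nu eps m j = 2 * rkc_w0 eps m * rkc_b eps m j / rkc_b eps m (j - 1)"

definition rkc_kappa :: "real \<Rightarrow> nat \<Rightarrow> nat \<Rightarrow> real" where
  "rkc_kappa eps m j = - rkc_b eps m j / rkc_b eps m (j - 2)"

fun rkc_k :: "real \<Rightarrow> nat \<Rightarrow> (real \<Rightarrow> real) \<Rightarrow> real \<Rightarrow> real \<Rightarrow> nat \<Rightarrow> real" where
  "rkc_k eps m g h u0 0 = u0"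
| "rkc_k eps m g h u0 (Suc 0) = u0 + rkc_w1 eps m / rkc_w0 eps m * h * g u0"
| "rkc_k eps m g h u0 (Suc (Suc j)) =
     rkc_nu eps m (j + 2) * rkc_k eps m g h u0 (Suc j)
   + rkc_kappa eps m (j + 2) * rkc_k eps m g h u0 j
   + rkc_mu eps m (j + 2) * h * g (rkc_k eps m g h u0 (Suc j))"

definition rkc_step :: "real \<Rightarrow> nat \<Rightarrow> (real \<Rightarrow> real) \<Rightarrow> real \<Rightarrow> real \<Rightarrow> real" where
  "rkc_step eps m g h u0 = rkc_k eps m g h u0 m"

definition rkc_P :: "real \<Rightarrow> nat \<Rightarrow> real \<Rightarrow> real" where
  "rkc_P eps m z = rkc_b eps m m * cheb m (rkc_w0 eps m + rkc_w1 eps m * z)"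

definition rkc_alpha :: "real \<Rightarrow> nat \<Rightarrow> real" where
  "rkc_alpha eps m = deriv (deriv (rkc_P eps m)) 0"

definition rkc_Phi :: "real \<Rightarrow> nat \<Rightarrow> real \<Rightarrow> real" where
  "rkc_Phi eps m z = (if z = 0 then 1 else (rkc_P eps m z - 1) / z)"

text \<open>Butcher tableau: coefficients A i j (used for j < i < s) and weights B i (i < s).
  Stage values K_0,...,K_{i-1} for the autonomous problem y' = f y.\<close>
fun erk_stages :: "(nat \<Rightarrow> nat \<Rightarrow> real) \<Rightarrow> (real \<Rightarrow> real) \<Rightarrow> real \<Rightarrow> real \<Rightarrow> nat \<Rightarrow> real list" where
  "erk_stages A f tau y 0 = []"
| "erk_stages A f tau y (Suc i) =
     (let ks = erk_stages A f tau y i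
      in ks @ [y + tau * (\<Sum>j<i. A i j * f (ks ! j))])"

definition erk_step :: "(nat \<Rightarrow> nat \<Rightarrow> real) \<Rightarrow> (nat \<Rightarrow> real) \<Rightarrow> nat \<Rightarrow> (real \<Rightarrow> real) \<Rightarrow> real \<Rightarrow> real \<Rightarrow> real" where
  "erk_step A B s f tau y =
     (let ks = erk_stages A f tau y s in y + tau * (\<Sum>i<s. B i * f (ks ! i)))"

text \<open>Stability polynomial R_s: applied to y' = kappa y with step tau the method gives
  y_1 = R_s(tau kappa) y_0; equivalently R_s(z) = one step of size 1 for y' = z y from 1.\<close>
definition erk_stab :: "(nat \<Rightarrow> nat \<Rightarrow> real) \<Rightarrow> (nat \<Rightarrow> real) \<Rightarrow> nat \<Rightarrow> real \<Rightarrow> real" where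
  "erk_stab A B s z = erk_step A B s (\<lambda>u. z * u) 1 1"

definition mrock_fbar1 :: "real \<Rightarrow> nat \<Rightarrow> (real \<Rightarrow> real) \<Rightarrow> (real \<Rightarrow> real) \<Rightarrow> real \<Rightarrow> real \<Rightarrow> real" where
  "mrock_fbar1 eps m fF fS eta y = (rkc_step eps m (\<lambda>u. fF u + fS y) eta y - y) / eta"

definition mrock_fbar2 :: "real \<Rightarrow> nat \<Rightarrow> (real \<Rightarrow> real) \<Rightarrow> (real \<Rightarrow> real) \<Rightarrow> real \<Rightarrow> real \<Rightarrow> real" where
  "mrock_fbar2 eps m fF fS eta y =
     (rkc_step eps m
        (\<lambda>v. fF (v - rkc_alpha eps m * eta / 2 * mrock_fbar1 eps m fF fS eta y) + fS y)
        eta y - y) / eta"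

definition mrock2_step ::
  "real \<Rightarrow> nat \<Rightarrow> (nat \<Rightarrow> nat \<Rightarrow> real) \<Rightarrow> (nat \<Rightarrow> real) \<Rightarrow> nat \<Rightarrow>
   (real \<Rightarrow> real) \<Rightarrow> (real \<Rightarrow> real) \<Rightarrow> real \<Rightarrow> real \<Rightarrow> real \<Rightarrow> real" where
  "mrock2_step eps m A B s fF fS tau eta y = erk_step A B s (mrock_fbar2 eps m fF fS eta) tau y"

end

theory Submission
  imports Defs
begin

text \<open>
  For an affine right-hand side \<open>u' = \<lambda> u + c\<close> every RKC stage has the form
  \<open>k\<^sub>j = u\<^sub>0 + h (\<lambda> u\<^sub>0 + c) \<Phi>\<^sub>j(h \<lambda>)\<close> with \<open>z \<Phi>\<^sub>j(z) = P\<^sub>j(z) - 1\<close>: the three-term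
  recurrence of the RKC coefficients is the Chebyshev recurrence rescaled by the \<open>b\<^sub>j\<close>, and
  \<open>\<nu>\<^sub>j + \<kappa>\<^sub>j = 1\<close> makes the constant parts cancel. With \<open>f\<^sub>F\<close> linear, both auxiliary problems
  of mROCK2 are affine, so \<open>f\<^sub>\<eta>\<^sub>,\<^sub>2\<close> is multiplication by
  \<open>K = \<Phi>\<^sub>m(\<eta>\<lambda>)(\<lambda> + \<zeta>)(1 - \<eta>\<lambda>\<alpha>\<^sub>m/2 \<Phi>\<^sub>m(\<eta>\<lambda>))\<close>, and an explicit Runge--Kutta step
  for \<open>y' = K y\<close> multiplies by \<open>R\<^sub>s(\<tau> K)\<close>.
\<close>

fun dcheb :: "nat \<Rightarrow> real \<Rightarrow> real" where
  "dcheb 0 x = 0"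
| "dcheb (Suc 0) x = 1"
| "dcheb (Suc (Suc j)) x = 2 * cheb (Suc j) x + 2 * x * dcheb (Suc j) x - dcheb j x"

lemma has_real_derivative_cheb: "(cheb j has_real_derivative dcheb j x) (at x)"
proof (induction j rule: induct_nat_012)
  case (ge2 j)
  have "cheb (Suc (Suc j)) = (\<lambda>x. 2 * x * cheb (Suc j) x - cheb j x)"
    by (rule ext) simp
  with ge2 show ?case
    by (auto intro!: derivative_eq_intros simp: algebra_simps)
qed (auto intro!: derivative_eq_intros)

lemma deriv_cheb: "deriv (cheb j) x = dcheb j x"
  using has_real_derivative_cheb by (rule DERIV_imp_deriv)

lemma cheb_ge_one_mono:
  assumes "1 \<le> x"
  shows "1 \<le> cheb j x \<and> cheb j x \<le> cheb (Suc j) x"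
proof (induction j)
  case (Suc j)
  then have "2 * cheb (Suc j) x \<le> 2 * x * cheb (Suc j) x"
    using assms by (simp del: cheb.simps add: mult_right_mono)
  moreover have "cheb (Suc (Suc j)) x = 2 * x * cheb (Suc j) x - cheb j x"
    by simp
  ultimately show ?case
    using Suc by linarith
qed (use assms in simp)

lemma cheb_ge_one: "1 \<le> x \<Longrightarrow> 1 \<le> cheb j x"
  using cheb_ge_one_mono by blast

lemma dcheb_ge_one_mono:
  assumes "1 \<le> x"
  shows "1 \<le> dcheb (Suc j) x \<and> dcheb (Suc j) x \<le> dcheb (Suc (Suc j)) x"
proof (induction j)
  case 0
  show ?case using assms by simp
next
  case (Suc j)
  then have "2 * dcheb (Suc (Suc j)) x \<le> 2 * x * dcheb (Suc (Suc j)) x"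
    using assms by (simp del: dcheb.simps add: mult_right_mono)
  moreover have "1 \<le> cheb (Suc (Suc j)) x"
    using assms by (rule cheb_ge_one)
  moreover have "dcheb (Suc (Suc (Suc j))) x
      = 2 * cheb (Suc (Suc j)) x + 2 * x * dcheb (Suc (Suc j)) x - dcheb (Suc j) x"
    by (rule dcheb.simps)
  ultimately show ?case
    using Suc by linarith
qed

lemma rkc_w0_ge_one: "0 \<le> eps \<Longrightarrow> 1 \<le> rkc_w0 eps m"
  by (simp add: rkc_w0_def)

lemma cheb_rkc_w0_nonzero: "0 \<le> eps \<Longrightarrow> cheb j (rkc_w0 eps m) \<noteq> 0"
  using cheb_ge_one rkc_w0_ge_one by (metis not_one_le_zero)

lemma rkc_coeffs_cheb:
  assumes "0 \<le> eps"
  shows "rkc_nu eps m (j + 2)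
      = 2 * rkc_w0 eps m * cheb (Suc j) (rkc_w0 eps m) / cheb (Suc (Suc j)) (rkc_w0 eps m)"
    and "rkc_kappa eps m (j + 2) = - cheb j (rkc_w0 eps m) / cheb (Suc (Suc j)) (rkc_w0 eps m)"
    and "rkc_mu eps m (j + 2)
      = 2 * rkc_w1 eps m * cheb (Suc j) (rkc_w0 eps m) / cheb (Suc (Suc j)) (rkc_w0 eps m)"
  using cheb_rkc_w0_nonzero[OF assms]
  by (simp_all del: cheb.simps add: rkc_nu_def rkc_kappa_def rkc_mu_def rkc_b_def)

lemma rkc_nu_plus_kappa:
  assumes "0 \<le> eps"
  shows "rkc_nu eps m (j + 2) + rkc_kappa eps m (j + 2) = 1"
proof -
  have "cheb (Suc (Suc j)) (rkc_w0 eps m) \<noteq> 0"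
    using assms by (rule cheb_rkc_w0_nonzero)
  then show ?thesis
    unfolding rkc_coeffs_cheb[OF assms]
    by (simp del: cheb.simps add: divide_simps) simp
qed

definition rkc_stage_P :: "real \<Rightarrow> nat \<Rightarrow> nat \<Rightarrow> real \<Rightarrow> real" where
  "rkc_stage_P eps m j z = rkc_b eps m j * cheb j (rkc_w0 eps m + rkc_w1 eps m * z)"

lemma rkc_stage_P_rec:
  assumes "0 \<le> eps"
  shows "rkc_nu eps m (j + 2) * rkc_stage_P eps m (Suc j) z
      + rkc_kappa eps m (j + 2) * rkc_stage_P eps m j z
      + rkc_mu eps m (j + 2) * z * rkc_stage_P eps m (Suc j) z
    = rkc_stage_P eps m (Suc (Suc j)) z"
proof -
  have "cheb i (rkc_w0 eps m) \<noteq> 0" for i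
    using assms by (rule cheb_rkc_w0_nonzero)
  moreover have "cheb (Suc (Suc j)) x = 2 * x * cheb (Suc j) x - cheb j x" for x
    by simp
  ultimately show ?thesis
    unfolding rkc_coeffs_cheb[OF assms] rkc_stage_P_def rkc_b_def
    by (simp del: cheb.simps add: field_simps)
qed

text \<open>\<open>\<Phi>\<^sub>j(z) = (P\<^sub>j(z) - 1)/z\<close>, taken as the \<open>j\<close>-th stage of a unit RKC step
  for \<open>u' = z u + 1\<close> from \<open>0\<close>; this form needs no case distinction at \<open>z = 0\<close>.\<close>
definition rkc_stage_Phi :: "real \<Rightarrow> nat \<Rightarrow> nat \<Rightarrow> real \<Rightarrow> real" where
  "rkc_stage_Phi eps m j z = rkc_k eps m (\<lambda>u. z * u + 1) 1 0 j"

lemma rkc_stage_Phi_rec: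
  "rkc_stage_Phi eps m (Suc (Suc j)) z
    = rkc_nu eps m (j + 2) * rkc_stage_Phi eps m (Suc j) z
    + rkc_kappa eps m (j + 2) * rkc_stage_Phi eps m j z
    + rkc_mu eps m (j + 2) * (z * rkc_stage_Phi eps m (Suc j) z + 1)"
  by (simp add: rkc_stage_Phi_def)

lemma rkc_stage_Phi_times:
  assumes "0 \<le> eps"
  shows "z * rkc_stage_Phi eps m j z = rkc_stage_P eps m j z - 1"
proof (induction j rule: induct_nat_012)
  case 0
  show ?case by (simp add: rkc_stage_Phi_def rkc_stage_P_def rkc_b_def)
next
  case 1
  have "1 \<le> rkc_w0 eps m"
    using assms by (rule rkc_w0_ge_one)
  then show ?case by (simp add: rkc_stage_Phi_def rkc_stage_P_def rkc_b_def field_simps)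
next
  case (ge2 j)
  have "z * rkc_stage_Phi eps m (Suc (Suc j)) z
      = rkc_nu eps m (j + 2) * (z * rkc_stage_Phi eps m (Suc j) z)
      + rkc_kappa eps m (j + 2) * (z * rkc_stage_Phi eps m j z)
      + rkc_mu eps m (j + 2) * z * (z * rkc_stage_Phi eps m (Suc j) z + 1)"
    unfolding rkc_stage_Phi_rec by (simp add: algebra_simps)
  also have "\<dots> = rkc_nu eps m (j + 2) * rkc_stage_P eps m (Suc j) z
      + rkc_kappa eps m (j + 2) * rkc_stage_P eps m j z
      + rkc_mu eps m (j + 2) * z * rkc_stage_P eps m (Suc j) z
      - (rkc_nu eps m (j + 2) + rkc_kappa eps m (j + 2))"
    unfolding ge2 by (simp add: algebra_simps)
  also have "\<dots> = rkc_stage_P eps m (Suc (Suc j)) z - 1"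
    unfolding rkc_stage_P_rec[OF assms] rkc_nu_plus_kappa[OF assms] ..
  finally show ?case .
qed

lemma rkc_stage_Phi_zero:
  assumes "0 \<le> eps"
  shows "rkc_stage_Phi eps m j 0 = rkc_w1 eps m * rkc_b eps m j * dcheb j (rkc_w0 eps m)"
proof (induction j rule: induct_nat_012)
  case 0
  show ?case by (simp add: rkc_stage_Phi_def)
next
  case 1
  have "1 \<le> rkc_w0 eps m"
    using assms by (rule rkc_w0_ge_one)
  then show ?case by (simp add: rkc_stage_Phi_def rkc_b_def)
next
  case (ge2 j)
  have "cheb i (rkc_w0 eps m) \<noteq> 0" for i
    using assms by (rule cheb_rkc_w0_nonzero)
  then show ?case
    unfolding rkc_stage_Phi_rec ge2 rkc_coeffs_cheb[OF assms] rkc_b_def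
    by (simp del: cheb.simps add: field_simps)
qed

lemma rkc_stage_Phi_eq_rkc_Phi:
  assumes "0 \<le> eps" and "1 \<le> m"
  shows "rkc_stage_Phi eps m m z = rkc_Phi eps m z"
proof (cases "z = 0")
  case True
  \<comment> \<open>\<open>\<Phi>\<^sub>m(0) = \<omega>\<^sub>1 b\<^sub>m T\<^sub>m'(\<omega>\<^sub>0) = 1\<close> is exactly the choice of \<open>\<omega>\<^sub>1\<close>.\<close>
  obtain k where "m = Suc k"
    using assms(2) by (cases m) auto
  then have "1 \<le> dcheb m (rkc_w0 eps m)"
    using dcheb_ge_one_mono rkc_w0_ge_one[OF assms(1)] by blast
  with True cheb_rkc_w0_nonzero[OF assms(1)] show ?thesis
    by (simp add: rkc_stage_Phi_zero[OF assms(1)] rkc_Phi_def rkc_w1_def deriv_cheb rkc_b_def)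
next
  case False
  with rkc_stage_Phi_times[OF assms(1), of z m] show ?thesis
    by (simp add: rkc_Phi_def rkc_P_def rkc_stage_P_def field_simps)
qed

lemma rkc_k_affine:
  assumes "0 \<le> eps"
  shows "rkc_k eps m (\<lambda>u. lam * u + c) h u0 j
    = u0 + h * (lam * u0 + c) * rkc_stage_Phi eps m j (h * lam)"
proof (induction j rule: induct_nat_012)
  case 0
  show ?case by (simp add: rkc_stage_Phi_def)
next
  case 1
  show ?case by (simp add: rkc_stage_Phi_def)
next
  case (ge2 j)
  let ?g = "\<lambda>u. lam * u + c" and ?\<Phi> = "\<lambda>i. rkc_stage_Phi eps m i (h * lam)"
  have "rkc_k eps m ?g h u0 (Suc (Suc j))
      = rkc_nu eps m (j + 2) * rkc_k eps m ?g h u0 (Suc j)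
      + rkc_kappa eps m (j + 2) * rkc_k eps m ?g h u0 j
      + rkc_mu eps m (j + 2) * h * ?g (rkc_k eps m ?g h u0 (Suc j))"
    by (simp only: rkc_k.simps)
  also have "\<dots> = (rkc_nu eps m (j + 2) + rkc_kappa eps m (j + 2)) * u0
      + h * (lam * u0 + c) * (rkc_nu eps m (j + 2) * ?\<Phi> (Suc j)
        + rkc_kappa eps m (j + 2) * ?\<Phi> j + rkc_mu eps m (j + 2) * (h * lam * ?\<Phi> (Suc j) + 1))"
    unfolding ge2 by (simp add: algebra_simps)
  also have "\<dots> = u0 + h * (lam * u0 + c) * ?\<Phi> (Suc (Suc j))"
    unfolding rkc_nu_plus_kappa[OF assms] rkc_stage_Phi_rec by simp
  finally show ?case .
qed

lemma rkc_step_affine: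
  assumes "0 \<le> eps" and "1 \<le> m"
  shows "rkc_step eps m (\<lambda>u. lam * u + c) h u0
    = u0 + h * (lam * u0 + c) * rkc_Phi eps m (h * lam)"
  unfolding rkc_step_def rkc_k_affine[OF assms(1)] rkc_stage_Phi_eq_rkc_Phi[OF assms] ..

lemma length_erk_stages: "length (erk_stages A f tau y i) = i"
  by (induction i) (simp_all add: Let_def)

lemma erk_stages_linear:
  "erk_stages A (\<lambda>u. K * u) tau y i = map (\<lambda>v. y * v) (erk_stages A (\<lambda>u. tau * K * u) 1 1 i)"
proof (induction i)
  case (Suc i)
  let ?ks = "erk_stages A (\<lambda>u. tau * K * u) 1 1 i"
  have "(\<Sum>j<i. A i j * (K * (erk_stages A (\<lambda>u. K * u) tau y i ! j)))
      = (\<Sum>j<i. A i j * (K * (y * (?ks ! j))))"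
    by (rule sum.cong) (simp_all add: Suc length_erk_stages)
  then have "y + tau * (\<Sum>j<i. A i j * (K * (erk_stages A (\<lambda>u. K * u) tau y i ! j)))
      = y * (1 + (\<Sum>j<i. A i j * (tau * K * (?ks ! j))))"
    by (simp add: sum_distrib_left algebra_simps)
  then show ?case by (simp add: Let_def Suc)
qed simp

lemma erk_step_linear:
  "erk_step A B s (\<lambda>u. K * u) tau y = erk_stab A B s (tau * K) * y"
proof -
  let ?ks = "erk_stages A (\<lambda>u. tau * K * u) 1 1 s"
  have "erk_step A B s (\<lambda>u. K * u) tau y
      = y + tau * (\<Sum>i<s. B i * (K * (erk_stages A (\<lambda>u. K * u) tau y s ! i)))"
    by (simp add: erk_step_def)
  also have "\<dots> = y + y * (\<Sum>i<s. B i * (tau * K * (?ks ! i)))"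
    unfolding erk_stages_linear[of A K tau y s] sum_distrib_left
    by (intro arg_cong2[where f = "(+)"] sum.cong) (simp_all add: length_erk_stages)
  also have "\<dots> = erk_stab A B s (tau * K) * y"
    by (simp add: erk_stab_def erk_step_def algebra_simps)
  finally show ?thesis .
qed

lemma mrock_fbar1_linear_fast:
  assumes "0 \<le> eps" and "1 \<le> m" and "eta \<noteq> 0"
  shows "mrock_fbar1 eps m (\<lambda>u. lam * u) fS eta y = rkc_Phi eps m (eta * lam) * (lam * y + fS y)"
  using assms(3) by (simp add: mrock_fbar1_def rkc_step_affine[OF assms(1,2)])

lemma mrock_fbar2_linear_fast:
  assumes "0 \<le> eps" and "1 \<le> m" and "eta \<noteq> 0"
  shows "mrock_fbar2 eps m (\<lambda>u. lam * u) fS eta y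
    = rkc_Phi eps m (eta * lam) * (1 - eta * lam * rkc_alpha eps m / 2 * rkc_Phi eps m (eta * lam))
      * (lam * y + fS y)"
proof -
  let ?\<Phi> = "rkc_Phi eps m (eta * lam)" and ?\<alpha> = "rkc_alpha eps m"
  have rhs_affine: "(\<lambda>v. lam * (v - ?\<alpha> * eta / 2 * mrock_fbar1 eps m (\<lambda>u. lam * u) fS eta y) + fS y)
      = (\<lambda>v. lam * v + (fS y - lam * ?\<alpha> * eta / 2 * ?\<Phi> * (lam * y + fS y)))"
    unfolding mrock_fbar1_linear_fast[OF assms] by (simp add: fun_eq_iff field_simps)
  show ?thesis
    unfolding mrock_fbar2_def rhs_affine rkc_step_affine[OF assms(1,2)]
    using assms(3) by (simp add: field_simps)
qed

theorem lemma4p4: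
  fixes lam zeta eps eta tau y :: real
    and m s :: nat
    and A :: "nat \<Rightarrow> nat \<Rightarrow> real" and B :: "nat \<Rightarrow> real"
  assumes "lam \<le> 0" and "zeta \<le> 0" and "eta > 0" and "tau > 0"
    and "eps \<ge> 0" and "m \<ge> 1"
  shows "mrock2_step eps m A B s (\<lambda>u. lam * u) (\<lambda>u. zeta * u) tau eta y =
    erk_stab A B s
      (tau * rkc_Phi eps m (eta * lam) * (lam + zeta)
         * (1 - eta * lam * rkc_alpha eps m / 2 * rkc_Phi eps m (eta * lam))) * y"
proof -
  let ?K = "rkc_Phi eps m (eta * lam) * (lam + zeta)
    * (1 - eta * lam * rkc_alpha eps m / 2 * rkc_Phi eps m (eta * lam))"
  have "eta \<noteq> 0"
    using assms(3) by simp
  have fbar2: "mrock_fbar2 eps m (\<lambda>u. lam * u) (\<lambda>u. zeta * u) eta = (\<lambda>u. ?K * u)"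
    unfolding fun_eq_iff mrock_fbar2_linear_fast[OF assms(5,6) \<open>eta \<noteq> 0\<close>]
    by (simp add: algebra_simps)
  show ?thesis
    unfolding mrock2_step_def fbar2 erk_step_linear by (simp add: mult.assoc)
qed

end
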